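(* Let $A\in\mathbb{C}^{n\times n}$, $C\in\mathbb{C}^{1\times n}$, $j\in\mathbb{N}$, and let $s=\{s_1,\dots,s_j\}\subset\mathbb{C}\setminus\Lambda(A^* )$ be a multiset of $j$ finite poles (so $\infty\notin s$). Assume the rational Krylov subspace $\mathcal{K}_j(A^*,C^*,s)$ is $A^*$-variant. Then there exists a rational Arnoldi decomposition $$A^*V_{j+1}\underline{K_j}=V_{j+1}\underline{H_j}$$ associated to $\mathcal{K}_j(A^*,C^*,s)$ such that $\underline{K_j}=\begin{bmatrix}0\\ I_j\end{bmatrix}\in\mathbb{C}^{(j+1)\times j}$, $\underline{H_j}=\begin{bmatrix}h_j\\ H_{-j}\end{bmatrix}$ with $h_j\in\mathbb{C}^{1\times j}$ and $H_{-j}\in\mathbb{C}^{j\times j}$ upper triangular, and $V_{j+1}=\begin{bmatrix}C^*& Z_j\end{bmatrix}$, where $Z_j\in\mathbb{C}^{n\times j}$ is a basis of $\mathcal{K}_j(A^*,C^*,s)$.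
   Context: Notation: $\Pi_k$ is the set of complex polynomials of degree at most $k$; $\Lambda(M)$ is the spectrum of $M$; $M^*$ is the conjugate transpose. For $M\in\mathbb{C}^{n\times n}$, $b\in\mathbb{C}^n$, $j\in\mathbb{N}$ and a multiset $s=\{s_1,\dots,s_j\}\subset(\mathbb{C}\cup\{\infty\})\setminus\Lambda(M)$, put $q(x)=\prod_{i:\,s_i\neq\infty}(x-s_i)$; the rational Krylov subspace of order $j$ with poles $s$ is $\mathcal{K}_j(M,b,s)=\{q(M)^{-1}p(M)b : p\in\Pi_{j-1}\}$, and the augmented Krylov subspace is $\mathcal{K}_j^+(M,b,s)=\mathcal{K}_{j+1}(M,b,s\cup\{\infty\})$. A subspace $\mathcal{V}$ is called $M$-variant if $M\mathcal{V}\not\subseteq\mathcal{V}$. A rational Arnoldi decomposition (RAD) is a relation $MV_{j+1}\underline{K_j}=V_{j+1}\underline{H_j}$ with $V_{j+1}\in\mathbb{C}^{n\times(j+1)}$ of full column rank, $\underline{K_j},\underline{H_j}\in\mathbb{C}^{(j+1)\times j}$ upper Hessenberg, such that the lower $j\times j$ subpencil $(H_{-j},K_{-j})$ (rows $2,\dots,j+1$) is regular and its generalized eigenvalues, called the poles of the decomposition, lie outside $\Lambda(M)$. The RAD is associated to $\mathcal{K}_j(M,b,s)$ if its poles are $s$, $V_{j+1}e_1$ is a nonzero multiple of $b$, $\operatorname{span}(V_{j+1})=\mathcal{K}_j^+(M,b,s)$ and $\operatorname{span}(V_{j+1}\underline{K_j})=\mathcal{K}_j(M,b,s)$. *)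

theory Defs
  imports "Jordan_Normal_Form.Schur_Decomposition"
          "Jordan_Normal_Form.Gauss_Jordan_Elimination"
          "Jordan_Normal_Form.Char_Poly"
          "HOL-Computational_Algebra.Polynomial"
begin

(* Conjugate transpose M^* : library notion mat_adjoint (Schur_Decomposition). *)

definition poly_mat :: "complex poly \<Rightarrow> complex mat \<Rightarrow> complex mat" where
  "poly_mat p M = foldr (\<lambda>c acc. c \<cdot>\<^sub>m 1\<^sub>m (dim_row M) + M * acc) (coeffs p)
                     (0\<^sub>m (dim_row M) (dim_row M))"

definition pole_mat :: "complex list \<Rightarrow> complex mat \<Rightarrow> complex mat" where
  "pole_mat s M = foldr (\<lambda>x acc. (M - x \<cdot>\<^sub>m 1\<^sub>m (dim_row M)) * acc) s (1\<^sub>m (dim_row M))"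

definition inv_mat :: "complex mat \<Rightarrow> complex mat" where
  "inv_mat Q = the (mat_inverse Q)"

definition polys_upto :: "nat \<Rightarrow> complex poly set" where
  "polys_upto k = {p. p = 0 \<or> degree p < k}"

definition rat_krylov :: "complex mat \<Rightarrow> complex vec \<Rightarrow> complex list \<Rightarrow> nat \<Rightarrow> complex vec set" where
  "rat_krylov M b s k =
     {inv_mat (pole_mat s M) *\<^sub>v (poly_mat p M *\<^sub>v b) | p. p \<in> polys_upto k}"

(* augmented Krylov subspace K_k^+(M,b,s) = K_{k+1}(M,b,s \<union> {\<infinity>});
   an infinite pole does not contribute to q, so this is the same q with degree bound k *)
definition aug_rat_krylov :: "complex mat \<Rightarrow> complex vec \<Rightarrow> complex list \<Rightarrow> nat \<Rightarrow> complex vec set" where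
  "aug_rat_krylov M b s k = rat_krylov M b s (Suc k)"

definition mat_variant :: "complex mat \<Rightarrow> complex vec set \<Rightarrow> bool" where
  "mat_variant M W \<longleftrightarrow> \<not> (\<forall>v\<in>W. M *\<^sub>v v \<in> W)"

definition col_span :: "complex mat \<Rightarrow> complex vec set" where
  "col_span V = {V *\<^sub>v x | x. x \<in> carrier_vec (dim_col V)}"

definition full_col_rank :: "complex mat \<Rightarrow> bool" where
  "full_col_rank V \<longleftrightarrow>
     (\<forall>x\<in>carrier_vec (dim_col V). V *\<^sub>v x = 0\<^sub>v (dim_row V) \<longrightarrow> x = 0\<^sub>v (dim_col V))"

definition is_basis_mat :: "complex mat \<Rightarrow> complex vec set \<Rightarrow> bool" where
  "is_basis_mat Z W \<longleftrightarrow> full_col_rank Z \<and> col_span Z = W"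

definition upper_hessenberg :: "complex mat \<Rightarrow> bool" where
  "upper_hessenberg H \<longleftrightarrow>
     (\<forall>i<dim_row H. \<forall>k<dim_col H. Suc k < i \<longrightarrow> H $$ (i, k) = 0)"

definition lower_part :: "complex mat \<Rightarrow> complex mat" where
  "lower_part H = mat (dim_col H) (dim_col H) (\<lambda>(i, k). H $$ (Suc i, k))"

definition is_RAD :: "complex mat \<Rightarrow> nat \<Rightarrow> complex mat \<Rightarrow> complex mat \<Rightarrow> complex mat \<Rightarrow> bool" where
  "is_RAD M j V K H \<longleftrightarrow>
     (let n = dim_row M in
      M \<in> carrier_mat n n \<and>
      V \<in> carrier_mat n (Suc j) \<and> K \<in> carrier_mat (Suc j) j \<and> H \<in> carrier_mat (Suc j) j \<and>
      full_col_rank V \<and>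
      M * V * K = V * H \<and>
      upper_hessenberg K \<and> upper_hessenberg H \<and>
      \<comment> \<open>regularity of the lower subpencil\<close>
      (\<exists>z. det (lower_part H - z \<cdot>\<^sub>m lower_part K) \<noteq> 0) \<and>
      \<comment> \<open>finite generalized eigenvalues (poles) lie outside the spectrum
          (the infinite pole is never in the spectrum)\<close>
      (\<forall>z. det (lower_part H - z \<cdot>\<^sub>m lower_part K) = 0 \<longrightarrow> \<not> eigenvalue M z))"

(* The poles of the RAD, counted with multiplicity, are exactly the finite poles
   in the list s (length s = j, so there are no infinite poles):
   det(H_{-j} - z K_{-j}) = c * prod_i (s_i - z) with c \<noteq> 0. *)
definition RAD_poles_are :: "complex mat \<Rightarrow> complex mat \<Rightarrow> complex list \<Rightarrow> bool" where
  "RAD_poles_are K H s \<longleftrightarrow>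
     length s = dim_col K \<and>
     (\<exists>c. c \<noteq> 0 \<and> (\<forall>z. det (lower_part H - z \<cdot>\<^sub>m lower_part K) = c * (\<Prod>x\<leftarrow>s. (x - z))))"

definition RAD_associated :: "complex mat \<Rightarrow> complex vec \<Rightarrow> complex list \<Rightarrow> nat \<Rightarrow>
    complex mat \<Rightarrow> complex mat \<Rightarrow> complex mat \<Rightarrow> bool" where
  "RAD_associated M b s j V K H \<longleftrightarrow>
     is_RAD M j V K H \<and>
     RAD_poles_are K H s \<and>
     (\<exists>\<alpha>. \<alpha> \<noteq> 0 \<and> col V 0 = \<alpha> \<cdot>\<^sub>v b) \<and>
     col_span V = aug_rat_krylov M b s j \<and>
     col_span (V * K) = rat_krylov M b s j"

end

theory Submission
  imports Defs
begin

text \<open>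
  Let \<open>w(p) = q(M)\<^sup>-\<^sup>1 p(M) b\<close> (\<open>krylov_vec p\<close>), so that \<open>\<K>\<^sub>k(M,b,s) = {w(p) : deg p < k}\<close>
  and \<open>M w(p) = w(x p)\<close>. The polynomials \<open>P\<^sub>k = (x - s\<^sub>k\<^sub>+\<^sub>1) \<cdots> (x - s\<^sub>j)\<close>
  (\<open>pole_poly (drop k s)\<close>) satisfy \<open>w(P\<^sub>0) = b\<close> and \<open>deg P\<^sub>k = j - k\<close>; take
  \<open>V = [w(P\<^sub>0) \<dots> w(P\<^sub>j)]\<close> and \<open>Z = [w(P\<^sub>1) \<dots> w(P\<^sub>j)]\<close>. The identity
  \<open>x P\<^sub>k\<^sub>+\<^sub>1 = P\<^sub>k + s\<^sub>k\<^sub>+\<^sub>1 P\<^sub>k\<^sub>+\<^sub>1\<close> is the \<open>k\<close>-th column of \<open>M V K = V H\<close> with \<open>K = [0; I]\<close>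
  and \<open>H\<close> bidiagonal with ones on the diagonal and \<open>s\<close> on the subdiagonal; the lower pencil
  of \<open>(H, K)\<close> is triangular with diagonal \<open>s\<^sub>i - z\<close>, so its poles are exactly \<open>s\<close>.
  Having distinct degrees, the \<open>P\<^sub>k\<close> form a basis of the polynomials of degree \<open>\<le> j\<close>, which
  gives the spans. Full column rank needs \<open>p(M) b \<noteq> 0\<close> for every nonzero \<open>p\<close> of degree
  \<open>\<le> j\<close>: otherwise \<open>M w(r) = w(x r mod p)\<close> would make \<open>\<K>\<^sub>j\<close> \<open>M\<close>-invariant.
\<close>

section \<open>Polynomials evaluated at a matrix\<close>

lemma smult_mat_mult_vec:
  "A \<in> carrier_mat nr nc \<Longrightarrow> v \<in> carrier_vec nc \<Longrightarrow> (c \<cdot>\<^sub>m A) *\<^sub>v v = (c::'a::comm_ring) \<cdot>\<^sub>v (A *\<^sub>v v)"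
  by (rule eq_vecI) (auto simp: scalar_prod_def sum_distrib_left mult.assoc intro!: sum.cong)

lemma zero_mat_mult_vec: "v \<in> carrier_vec m \<Longrightarrow> 0\<^sub>m n m *\<^sub>v v = (0\<^sub>v n :: 'a::semiring_0 vec)"
  by (rule eq_vecI) (auto simp: scalar_prod_def)

lemma mult_zero_vec: "A \<in> carrier_mat nr nc \<Longrightarrow> A *\<^sub>v 0\<^sub>v nc = (0\<^sub>v nr :: 'a::semiring_0 vec)"
  by (rule eq_vecI) (auto simp: scalar_prod_def)

lemma inv_mat_correct:
  assumes Q: "Q \<in> carrier_mat n n" and d: "det Q \<noteq> (0::complex)"
  shows "Q * inv_mat Q = 1\<^sub>m n" "inv_mat Q * Q = 1\<^sub>m n" "inv_mat Q \<in> carrier_mat n n"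
proof -
  obtain B where B: "mat_inverse Q = Some B"
    using mat_inverse(1)[OF Q, where b="()"] det_non_zero_imp_unit[OF Q d, where b="()"] by blast
  then show "Q * inv_mat Q = 1\<^sub>m n" "inv_mat Q * Q = 1\<^sub>m n" "inv_mat Q \<in> carrier_mat n n"
    using mat_inverse(2)[OF Q B] unfolding inv_mat_def by auto
qed

lemma poly_mat_carrier [simp]: "M \<in> carrier_mat n n \<Longrightarrow> poly_mat p M \<in> carrier_mat n n"
proof -
  assume M: "M \<in> carrier_mat n n"
  have "foldr (\<lambda>c acc. c \<cdot>\<^sub>m 1\<^sub>m (dim_row M) + M * acc) cs (0\<^sub>m (dim_row M) (dim_row M))
          \<in> carrier_mat n n" for cs
    using M by (induction cs) auto
  then show ?thesis unfolding poly_mat_def .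
qed

lemma dim_poly_mat [simp]:
  "M \<in> carrier_mat n n \<Longrightarrow> dim_row (poly_mat p M) = n"
  "M \<in> carrier_mat n n \<Longrightarrow> dim_col (poly_mat p M) = n"
  by (auto dest: poly_mat_carrier[of _ _ p])

lemma poly_mat_0 [simp]: "M \<in> carrier_mat n n \<Longrightarrow> poly_mat 0 M = 0\<^sub>m n n"
  unfolding poly_mat_def by auto

lemma poly_mat_pCons:
  assumes M: "M \<in> carrier_mat n n"
  shows "poly_mat (pCons a p) M = a \<cdot>\<^sub>m 1\<^sub>m n + M * poly_mat p M"
proof (cases "a = 0 \<and> p = 0")
  case True
  then show ?thesis using M by auto
next
  case False
  then have "coeffs (pCons a p) = a # coeffs p" by (auto simp: cCons_def)
  then show ?thesis using M unfolding poly_mat_def by auto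
qed

lemma poly_mat_add:
  assumes M: "M \<in> carrier_mat n n"
  shows "poly_mat (p + q) M = poly_mat p M + poly_mat q M"
proof (induction p q rule: poly_induct2)
  case 0
  then show ?case using M by simp
next
  case (pCons a p b q)
  have pq: "poly_mat p M \<in> carrier_mat n n" "poly_mat q M \<in> carrier_mat n n" using M by auto
  show ?case
    unfolding add_pCons poly_mat_pCons[OF M] pCons mult_add_distrib_mat[OF M pq]
    using M pq by (intro eq_matI) (auto simp: algebra_simps)
qed

lemma poly_mat_smult:
  assumes M: "M \<in> carrier_mat n n"
  shows "poly_mat (smult c p) M = c \<cdot>\<^sub>m poly_mat p M"
proof (induction p)
  case 0
  then show ?case using M by (auto intro!: eq_matI)
next
  case (pCons a p)
  have p: "poly_mat p M \<in> carrier_mat n n" using M by auto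
  show ?case
    unfolding smult_pCons poly_mat_pCons[OF M] pCons(2)
    using M p by (intro eq_matI) (auto simp: mult_smult_distrib[OF M p] algebra_simps)
qed

lemma poly_mat_mult:
  assumes M: "M \<in> carrier_mat n n"
  shows "poly_mat (p * q) M = poly_mat p M * poly_mat q M"
proof (induction p)
  case 0
  then show ?case using M by (simp add: left_mult_zero_mat[of _ n n])
next
  case (pCons a p)
  have pq: "poly_mat p M \<in> carrier_mat n n" "poly_mat q M \<in> carrier_mat n n" using M by auto
  have "poly_mat (pCons a p * q) M = a \<cdot>\<^sub>m poly_mat q M + M * (poly_mat p M * poly_mat q M)"
    unfolding mult_pCons_left poly_mat_add[OF M] poly_mat_smult[OF M] poly_mat_pCons[OF M]
      pCons(2)
    using M pq by (intro eq_matI) auto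
  also have "\<dots> = poly_mat (pCons a p) M * poly_mat q M"
    unfolding poly_mat_pCons[OF M]
    using M pq by (simp add: add_mult_distrib_mat[of _ n n _ _ n] assoc_mult_mat[of _ n n _ n _ n]
        mult_smult_assoc_mat[of _ n n _ n])
  finally show ?case .
qed

lemma poly_mat_linear:
  assumes M: "M \<in> carrier_mat n n"
  shows "poly_mat [:-x, 1:] M = M - x \<cdot>\<^sub>m 1\<^sub>m n"
  unfolding poly_mat_pCons[OF M] using M by (auto intro!: eq_matI)

lemma poly_mat_X:
  assumes M: "M \<in> carrier_mat n n"
  shows "poly_mat [:0, 1:] M = M"
  unfolding poly_mat_pCons[OF M] using M by auto

lemma poly_mat_commute:
  assumes M: "M \<in> carrier_mat n n"
  shows "poly_mat p M * M = M * poly_mat p M"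
  using poly_mat_mult[OF M, of p "[:0, 1:]"] poly_mat_mult[OF M, of "[:0, 1:]" p]
  by (simp add: poly_mat_X[OF M] mult.commute)

section \<open>Products of linear factors\<close>

definition pole_poly :: "'a::comm_ring_1 list \<Rightarrow> 'a poly" where
  "pole_poly s = (\<Prod>x\<leftarrow>s. [:-x, 1:])"

lemma pole_poly_Nil [simp]: "pole_poly [] = 1"
  and pole_poly_Cons [simp]: "pole_poly (x # s) = [:-x, 1:] * pole_poly s"
  by (simp_all add: pole_poly_def)

lemma pole_mat_eq_poly_mat:
  assumes M: "M \<in> carrier_mat n n"
  shows "pole_mat s M = poly_mat (pole_poly s) M"
proof (induction s)
  case Nil
  have "poly_mat 1 M = 1\<^sub>m n"
    using poly_mat_pCons[OF M, of 1 0] M by (auto simp: one_pCons intro!: eq_matI)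
  then show ?case using M unfolding pole_mat_def by auto
next
  case (Cons x s)
  have "pole_mat (x # s) M = (M - x \<cdot>\<^sub>m 1\<^sub>m n) * pole_mat s M"
    using M unfolding pole_mat_def by simp
  then show ?case
    using Cons by (simp only: pole_poly_Cons poly_mat_mult[OF M] poly_mat_linear[OF M])
qed

lemma pole_mat_carrier: "M \<in> carrier_mat n n \<Longrightarrow> pole_mat s M \<in> carrier_mat n n"
  by (simp add: pole_mat_eq_poly_mat)

lemma det_pole_mat_nonzero:
  assumes M: "M \<in> carrier_mat n n" and poles: "\<forall>x\<in>set s. \<not> eigenvalue M x"
  shows "det (pole_mat s M) \<noteq> 0"
  using poles
proof (induction s)
  case Nil
  then show ?case using M by (simp add: pole_mat_def)
next
  case (Cons x s)
  have factor: "M - x \<cdot>\<^sub>m 1\<^sub>m n = char_matrix M x"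
    unfolding char_matrix_def using M by (auto intro!: eq_matI)
  have "pole_mat (x # s) M = (M - x \<cdot>\<^sub>m 1\<^sub>m n) * pole_mat s M"
    using M unfolding pole_mat_def by simp
  then have "det (pole_mat (x # s) M) = det (char_matrix M x) * det (pole_mat s M)"
    unfolding factor using M pole_mat_carrier[OF M, of s] by (simp add: det_mult[of _ n])
  then show ?case using Cons eigenvalue_det[OF M, of x] by simp
qed

lemma pole_poly_monic:
  fixes s :: "'a::idom list"
  shows "degree (pole_poly s) = length s \<and> lead_coeff (pole_poly s) = 1"
proof (induction s)
  case (Cons x s)
  then have "pole_poly s \<noteq> 0" by auto
  then have "degree ([:-x, 1:] * pole_poly s) = Suc (length s)"
    using Cons by (simp add: degree_mult_eq del: mult_pCons_left)
  moreover have "lead_coeff [:-x, 1:] = 1" by simp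
  then have "lead_coeff ([:-x, 1:] * pole_poly s) = 1"
    using Cons.IH by (metis lead_coeff_mult mult_1)
  ultimately show ?case by simp
qed simp

lemma degree_pole_poly [simp]: "degree (pole_poly (s :: 'a::idom list)) = length s"
  and lead_coeff_pole_poly [simp]: "lead_coeff (pole_poly (s :: 'a::idom list)) = 1"
  using pole_poly_monic by blast+

lemma pole_poly_drop_Suc:
  "k < length s \<Longrightarrow> pole_poly (drop k s) = [:-(s ! k), 1:] * pole_poly (drop (Suc k) s)"
  by (simp add: Cons_nth_drop_Suc[symmetric])

lemma degree_sum_pole_poly_drop_le:
  fixes s :: "'a::idom list"
  assumes "finite S" and "\<And>k. k \<in> S \<Longrightarrow> length s \<le> d + k"
  shows "degree (\<Sum>k\<in>S. smult (c k) (pole_poly (drop k s))) \<le> d"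
proof (rule degree_sum_le[OF assms(1)])
  fix k assume "k \<in> S"
  then show "degree (smult (c k) (pole_poly (drop k s))) \<le> d"
    using assms(2) degree_smult_le[of "c k" "pole_poly (drop k s)"] by fastforce
qed

lemma pole_poly_drop_independent:
  fixes s :: "'a::idom list"
  assumes S: "S \<subseteq> {..length s}" and sum: "(\<Sum>k\<in>S. smult (c k) (pole_poly (drop k s))) = 0"
    and m: "m \<in> S"
  shows "c m = 0"
  using m
proof (induction m rule: less_induct)
  case (less m)
  have "coeff (\<Sum>k\<in>S. smult (c k) (pole_poly (drop k s))) (length s - m)
      = (\<Sum>k\<in>S. if k = m then c m else 0)"
    unfolding coeff_sum coeff_smult
  proof (rule sum.cong[OF refl])
    fix k assume k: "k \<in> S"
    show "c k * coeff (pole_poly (drop k s)) (length s - m) = (if k = m then c m else 0)"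
    proof (cases k m rule: linorder_cases)
      case less
      then show ?thesis using less.IH k by simp
    next
      case equal
      then show ?thesis by (metis degree_pole_poly lead_coeff_pole_poly length_drop mult_1_right)
    next
      case greater
      then have "length s - k < length s - m" using k S by auto
      then show ?thesis using greater by (simp add: coeff_eq_0)
    qed
  qed
  then show "c m = 0" using less.prems finite_subset[OF S] sum by simp
qed

lemma pole_poly_drop_spanning:
  fixes s :: "'a::idom list"
  assumes "d \<le> length s" and "degree p \<le> d"
  shows "\<exists>c. p = (\<Sum>k\<in>{length s - d..length s}. smult (c k) (pole_poly (drop k s)))"
  using assms
proof (induction d arbitrary: p)
  case 0
  then have "p = [:coeff p 0:]" by (simp add: degree_0_id)
  then have "p = (\<Sum>k\<in>{length s - 0..length s}. smult (coeff p 0) (pole_poly (drop k s)))"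
    by simp
  then show ?case by (rule exI[of _ "\<lambda>_. coeff p 0"])
next
  case (Suc d)
  define e where "e = length s - Suc d"
  have e: "length s - e = Suc d" "e \<notin> {length s - d..length s}"
    and range: "{length s - Suc d..length s} = insert e {length s - d..length s}"
    using Suc.prems unfolding e_def by auto
  define p' where "p' = p - smult (coeff p (Suc d)) (pole_poly (drop e s))"
  have "degree p' \<le> d"
  proof (rule degree_le, intro allI impI)
    fix i assume "d < i"
    then consider "i = Suc d" | "Suc d < i" by linarith
    then show "coeff p' i = 0"
    proof cases
      case 1
      then show ?thesis
        unfolding p'_def using e(1) by (metis coeff_diff coeff_smult degree_pole_poly
            diff_self lead_coeff_pole_poly length_drop mult.right_neutral)
    next
      case 2
      then show ?thesis unfolding p'_def using e(1) Suc.prems(2) by (simp add: coeff_eq_0)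
    qed
  qed
  then obtain c where c: "p' = (\<Sum>k\<in>{length s - d..length s}. smult (c k) (pole_poly (drop k s)))"
    using Suc.IH[of p'] Suc.prems by auto
  let ?c = "c(e := coeff p (Suc d))"
  have "(\<Sum>k\<in>{length s - d..length s}. smult (?c k) (pole_poly (drop k s))) = p'"
    unfolding c using e(2) by (intro sum.cong) auto
  then have "p = (\<Sum>k\<in>{length s - Suc d..length s}. smult (?c k) (pole_poly (drop k s)))"
    unfolding range using e(2) by (simp add: p'_def)
  then show ?case by blast
qed

section \<open>The Arnoldi pencil\<close>

definition arnoldi_K :: "nat \<Rightarrow> complex mat" where
  "arnoldi_K j = mat (Suc j) j (\<lambda>(i, k). if i = Suc k then 1 else 0)"

definition arnoldi_H :: "complex list \<Rightarrow> complex mat" where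
  "arnoldi_H s = mat (Suc (length s)) (length s)
     (\<lambda>(i, k). if i = k then 1 else if i = Suc k then s ! k else 0)"

lemma arnoldi_K_carrier [simp]: "arnoldi_K j \<in> carrier_mat (Suc j) j"
  and arnoldi_H_carrier [simp]: "arnoldi_H s \<in> carrier_mat (Suc (length s)) (length s)"
  unfolding arnoldi_K_def arnoldi_H_def by simp_all

lemma dim_arnoldi [simp]:
  "dim_row (arnoldi_K j) = Suc j" "dim_col (arnoldi_K j) = j"
  "dim_row (arnoldi_H s) = Suc (length s)" "dim_col (arnoldi_H s) = length s"
  unfolding arnoldi_K_def arnoldi_H_def by simp_all

lemma upper_hessenberg_arnoldi: "upper_hessenberg (arnoldi_K j)" "upper_hessenberg (arnoldi_H s)"
  unfolding upper_hessenberg_def arnoldi_K_def arnoldi_H_def by auto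

lemma upper_triangular_lower_arnoldi_H: "upper_triangular (lower_part (arnoldi_H s))"
  unfolding upper_triangular_def lower_part_def arnoldi_H_def by auto

lemma det_arnoldi_pencil:
  "det (lower_part (arnoldi_H s) - z \<cdot>\<^sub>m lower_part (arnoldi_K (length s))) = (\<Prod>x\<leftarrow>s. x - z)"
proof -
  let ?D = "lower_part (arnoldi_H s) - z \<cdot>\<^sub>m lower_part (arnoldi_K (length s))"
  have D: "?D \<in> carrier_mat (length s) (length s)"
    unfolding lower_part_def arnoldi_H_def arnoldi_K_def by (simp add: minus_carrier_mat)
  have "upper_triangular ?D"
    unfolding upper_triangular_def lower_part_def arnoldi_H_def arnoldi_K_def by auto
  then have "det ?D = prod_list (diag_mat ?D)"
    by (rule det_upper_triangular[OF _ D])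
  also have "diag_mat ?D = map (\<lambda>x. x - z) s"
    using D by (intro nth_equalityI)
      (auto simp: diag_mat_def lower_part_def arnoldi_H_def arnoldi_K_def)
  finally show ?thesis by simp
qed

lemma sum_col_arnoldi_K:
  assumes "k < length s"
  shows "(\<Sum>i<Suc (length s). smult (col (arnoldi_K (length s)) k $ i) (pole_poly (drop i s)))
       = pole_poly (drop (Suc k) s)"
  using assms by (simp add: arnoldi_K_def if_distrib[of "\<lambda>c. smult c _"] cong: if_cong)

lemma sum_col_arnoldi_H:
  assumes k: "k < length s"
  shows "(\<Sum>i<Suc (length s). smult (col (arnoldi_H s) k $ i) (pole_poly (drop i s)))
       = [:0, 1:] * pole_poly (drop (Suc k) s)"
proof -
  have "(\<Sum>i<Suc (length s). smult (col (arnoldi_H s) k $ i) (pole_poly (drop i s)))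
      = (\<Sum>i<Suc (length s). (if i = k then pole_poly (drop i s) else 0)
            + (if i = Suc k then smult (s ! k) (pole_poly (drop i s)) else 0))"
    using k by (intro sum.cong refl) (auto simp: arnoldi_H_def)
  also have "\<dots> = pole_poly (drop k s) + smult (s ! k) (pole_poly (drop (Suc k) s))"
    using k by (simp add: sum.distrib)
  also have "\<dots> = [:0, 1:] * pole_poly (drop (Suc k) s)"
    unfolding pole_poly_drop_Suc[OF k] by simp
  finally show ?thesis .
qed

section \<open>The rational Krylov map\<close>

locale rat_krylov_data =
  fixes M :: "complex mat" and b :: "complex vec" and s :: "complex list" and n :: nat
  assumes M: "M \<in> carrier_mat n n" and b: "b \<in> carrier_vec n"
    and poles: "\<forall>x\<in>set s. \<not> eigenvalue M x"
begin

abbreviation qM :: "complex mat" where "qM \<equiv> pole_mat s M"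

definition krylov_vec :: "complex poly \<Rightarrow> complex vec" where
  "krylov_vec p = inv_mat qM *\<^sub>v (poly_mat p M *\<^sub>v b)"

lemma qM_carrier: "qM \<in> carrier_mat n n"
  by (rule pole_mat_carrier[OF M])

lemma inv_qM: "qM * inv_mat qM = 1\<^sub>m n" "inv_mat qM * qM = 1\<^sub>m n" "inv_mat qM \<in> carrier_mat n n"
  using inv_mat_correct[OF qM_carrier det_pole_mat_nonzero[OF M poles]] by auto

lemma inv_qM_commute: "inv_mat qM * M = M * inv_mat qM"
proof -
  have comm: "qM * M = M * qM"
    unfolding pole_mat_eq_poly_mat[OF M] by (rule poly_mat_commute[OF M])
  have "inv_mat qM * M = inv_mat qM * M * (qM * inv_mat qM)"
    using inv_qM M by simp
  also have "\<dots> = inv_mat qM * (qM * M) * inv_mat qM"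
    unfolding comm using inv_qM qM_carrier M by (simp add: assoc_mult_mat[of _ n n _ n _ n])
  also have "\<dots> = (inv_mat qM * qM) * (M * inv_mat qM)"
    using inv_qM(3) qM_carrier M by (simp add: assoc_mult_mat[of _ n n _ n _ n])
  also have "\<dots> = M * inv_mat qM"
    unfolding inv_qM(2) using inv_qM M by simp
  finally show ?thesis .
qed

lemma rat_krylov_eq_image: "rat_krylov M b s k = krylov_vec ` polys_upto k"
  unfolding rat_krylov_def krylov_vec_def by blast

lemma poly_mat_mult_b_carrier [simp]: "poly_mat p M *\<^sub>v b \<in> carrier_vec n"
  by (rule mult_mat_vec_carrier[OF poly_mat_carrier[OF M] b])

lemma krylov_vec_carrier [simp]: "krylov_vec p \<in> carrier_vec n"
  unfolding krylov_vec_def by (rule mult_mat_vec_carrier[OF inv_qM(3)]) simp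

lemma dim_krylov_vec [simp]: "dim_vec (krylov_vec p) = n"
  using krylov_vec_carrier by (rule carrier_vecD)

lemma krylov_vec_0: "krylov_vec 0 = 0\<^sub>v n"
  unfolding krylov_vec_def poly_mat_0[OF M] zero_mat_mult_vec[OF b] mult_zero_vec[OF inv_qM(3)] ..

lemma krylov_vec_add: "krylov_vec (p + q) = krylov_vec p + krylov_vec q"
  unfolding krylov_vec_def poly_mat_add[OF M]
    add_mult_distrib_mat_vec[OF poly_mat_carrier[OF M] poly_mat_carrier[OF M] b]
  by (rule mult_add_distrib_mat_vec[OF inv_qM(3)]) simp_all

lemma krylov_vec_smult: "krylov_vec (smult c p) = c \<cdot>\<^sub>v krylov_vec p"
  unfolding krylov_vec_def poly_mat_smult[OF M] smult_mat_mult_vec[OF poly_mat_carrier[OF M] b]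
  by (rule mult_mat_vec[OF inv_qM(3)]) simp

lemma krylov_vec_sum_index:
  assumes "finite S" and "i < n"
  shows "krylov_vec (\<Sum>k\<in>S. f k) $ i = (\<Sum>k\<in>S. krylov_vec (f k) $ i)"
  using assms(1) by induction (simp_all add: krylov_vec_0 krylov_vec_add assms(2))

lemma mult_krylov_vec: "M *\<^sub>v krylov_vec p = krylov_vec ([:0, 1:] * p)"
proof -
  have "M *\<^sub>v krylov_vec p = (inv_mat qM * M) *\<^sub>v (poly_mat p M *\<^sub>v b)"
    unfolding krylov_vec_def inv_qM_commute using inv_qM M by simp
  also have "\<dots> = krylov_vec ([:0, 1:] * p)"
    unfolding krylov_vec_def poly_mat_mult[OF M] poly_mat_X[OF M]
    using inv_qM M b assoc_mult_mat_vec[OF M poly_mat_carrier[OF M] b] by simp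
  finally show ?thesis .
qed

lemma krylov_vec_pole_poly: "krylov_vec (pole_poly s) = b"
proof -
  have "krylov_vec (pole_poly s) = (inv_mat qM * qM) *\<^sub>v b"
    unfolding krylov_vec_def pole_mat_eq_poly_mat[OF M, symmetric]
    using assoc_mult_mat_vec[OF inv_qM(3) qM_carrier b] by simp
  then show ?thesis using inv_qM b by simp
qed

lemma krylov_vec_eq_0D: "krylov_vec p = 0\<^sub>v n \<Longrightarrow> poly_mat p M *\<^sub>v b = 0\<^sub>v n"
proof -
  assume "krylov_vec p = 0\<^sub>v n"
  moreover have "qM *\<^sub>v krylov_vec p = (qM * inv_mat qM) *\<^sub>v (poly_mat p M *\<^sub>v b)"
    unfolding krylov_vec_def by (rule assoc_mult_mat_vec[symmetric, OF qM_carrier inv_qM(3)]) simp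
  then have "poly_mat p M *\<^sub>v b = qM *\<^sub>v krylov_vec p"
    unfolding inv_qM(1) by simp
  ultimately show ?thesis using mult_zero_vec[OF qM_carrier] by simp
qed

definition krylov_mat :: "nat \<Rightarrow> (nat \<Rightarrow> complex poly) \<Rightarrow> complex mat" where
  "krylov_mat m g = mat n m (\<lambda>(i, k). krylov_vec (g k) $ i)"

lemma krylov_mat_carrier [simp]: "krylov_mat m g \<in> carrier_mat n m"
  unfolding krylov_mat_def by simp

lemma col_krylov_mat: "k < m \<Longrightarrow> col (krylov_mat m g) k = krylov_vec (g k)"
  unfolding krylov_mat_def by (intro eq_vecI) auto

lemma krylov_mat_mult_vec:
  assumes y: "y \<in> carrier_vec m"
  shows "krylov_mat m g *\<^sub>v y = krylov_vec (\<Sum>k<m. smult (y $ k) (g k))"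
proof (rule eq_vecI)
  fix i assume "i < dim_vec (krylov_vec (\<Sum>k<m. smult (y $ k) (g k)))"
  then have i: "i < n" by simp
  have "(krylov_mat m g *\<^sub>v y) $ i = (\<Sum>k<m. krylov_vec (g k) $ i * y $ k)"
    using i y unfolding krylov_mat_def by (auto simp: scalar_prod_def atLeast0LessThan)
  also have "\<dots> = krylov_vec (\<Sum>k<m. smult (y $ k) (g k)) $ i"
    unfolding krylov_vec_sum_index[OF finite_lessThan i] krylov_vec_smult
    using i by (simp add: mult.commute)
  finally show "(krylov_mat m g *\<^sub>v y) $ i = krylov_vec (\<Sum>k<m. smult (y $ k) (g k)) $ i" .
qed (simp add: krylov_mat_def)

definition basis_Z :: "complex mat" where
  "basis_Z = krylov_mat (length s) (\<lambda>k. pole_poly (drop (Suc k) s))"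

definition basis_V :: "complex mat" where
  "basis_V = krylov_mat (Suc (length s)) (\<lambda>k. pole_poly (drop k s))"

lemma basis_Z_carrier: "basis_Z \<in> carrier_mat n (length s)"
  and basis_V_carrier: "basis_V \<in> carrier_mat n (Suc (length s))"
  unfolding basis_Z_def basis_V_def by simp_all

lemma col_basis_Z: "k < length s \<Longrightarrow> col basis_Z k = krylov_vec (pole_poly (drop (Suc k) s))"
  unfolding basis_Z_def by (rule col_krylov_mat)

lemma col_basis_V: "k < Suc (length s) \<Longrightarrow> col basis_V k = krylov_vec (pole_poly (drop k s))"
  unfolding basis_V_def by (rule col_krylov_mat)

lemma basis_V_eq_mat_of_cols: "basis_V = mat_of_cols n (b # cols basis_Z)"
proof (rule mat_col_eqI)
  fix k assume "k < dim_col (mat_of_cols n (b # cols basis_Z))"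
  then have k: "k < Suc (length s)" using basis_Z_carrier by simp
  show "col basis_V k = col (mat_of_cols n (b # cols basis_Z)) k"
  proof (cases k)
    case 0
    then show ?thesis
      unfolding col_basis_V[OF k] using b by (simp add: krylov_vec_pole_poly)
  next
    case (Suc k')
    then have k': "k' < length s" using k by simp
    have "col (mat_of_cols n (b # cols basis_Z)) (Suc k') = col basis_Z k'"
      using basis_Z_carrier k' by (subst col_mat_of_cols) auto
    then show ?thesis
      using col_basis_V[OF k] Suc k' by (simp add: col_basis_Z)
  qed
qed (use basis_V_carrier basis_Z_carrier in auto)

lemma basis_V_mult_vec:
  "x \<in> carrier_vec (Suc (length s)) \<Longrightarrow>
     basis_V *\<^sub>v x = krylov_vec (\<Sum>k\<in>{..length s}. smult (x $ k) (pole_poly (drop k s)))"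
  unfolding basis_V_def lessThan_Suc_atMost[symmetric] by (rule krylov_mat_mult_vec)

lemma basis_Z_mult_vec:
  "y \<in> carrier_vec (length s) \<Longrightarrow>
     basis_Z *\<^sub>v y = krylov_vec (\<Sum>k\<in>{1..length s}. smult (y $ (k - 1)) (pole_poly (drop k s)))"
  unfolding basis_Z_def krylov_mat_mult_vec image_Suc_lessThan[symmetric] by (simp add: sum.reindex)

lemma col_span_basis_V: "col_span basis_V = aug_rat_krylov M b s (length s)"
proof (intro equalityI subsetI)
  fix v assume "v \<in> col_span basis_V"
  then obtain x where x: "x \<in> carrier_vec (Suc (length s))" and v: "v = basis_V *\<^sub>v x"
    unfolding col_span_def using basis_V_carrier by auto
  have "degree (\<Sum>k\<in>{..length s}. smult (x $ k) (pole_poly (drop k s))) \<le> length s"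
    by (rule degree_sum_pole_poly_drop_le) auto
  then show "v \<in> aug_rat_krylov M b s (length s)"
    unfolding v basis_V_mult_vec[OF x] aug_rat_krylov_def rat_krylov_eq_image polys_upto_def
    by auto
next
  fix v assume "v \<in> aug_rat_krylov M b s (length s)"
  then obtain p where v: "v = krylov_vec p" and "p \<in> polys_upto (Suc (length s))"
    unfolding aug_rat_krylov_def rat_krylov_eq_image by auto
  then have "degree p \<le> length s" unfolding polys_upto_def by auto
  then obtain c where "p = (\<Sum>k\<in>{0..length s}. smult (c k) (pole_poly (drop k s)))"
    using pole_poly_drop_spanning[of "length s" s p] by auto
  then have "v = basis_V *\<^sub>v vec (Suc (length s)) c"
    unfolding v by (subst basis_V_mult_vec) (auto simp: atLeast0AtMost)
  then show "v \<in> col_span basis_V" unfolding col_span_def using basis_V_carrier by auto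
qed

lemma basis_V_mult_arnoldi_K: "basis_V * arnoldi_K (length s) = basis_Z"
proof (rule mat_col_eqI)
  fix k assume "k < dim_col basis_Z"
  then have k: "k < length s" using basis_Z_carrier by simp
  have "col (basis_V * arnoldi_K (length s)) k = basis_V *\<^sub>v col (arnoldi_K (length s)) k"
    using col_mult2[OF basis_V_carrier arnoldi_K_carrier k] .
  also have "\<dots> = col basis_Z k"
    unfolding basis_V_def krylov_mat_mult_vec[OF col_carrier_vec[OF k arnoldi_K_carrier]]
      sum_col_arnoldi_K[OF k] col_basis_Z[OF k] ..
  finally show "col (basis_V * arnoldi_K (length s)) k = col basis_Z k" .
qed (use basis_V_carrier basis_Z_carrier in auto)

lemma arnoldi_relation: "M * basis_V * arnoldi_K (length s) = basis_V * arnoldi_H s"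
proof -
  have "M * basis_V * arnoldi_K (length s) = M * basis_Z"
    using M basis_V_carrier by (simp add: basis_V_mult_arnoldi_K[symmetric] assoc_mult_mat[of _ n n _ _ _ "length s"])
  also have "\<dots> = basis_V * arnoldi_H s"
  proof (rule mat_col_eqI)
    fix k assume "k < dim_col (basis_V * arnoldi_H s)"
    then have k: "k < length s" by simp
    have "col (M * basis_Z) k = M *\<^sub>v krylov_vec (pole_poly (drop (Suc k) s))"
      unfolding col_mult2[OF M basis_Z_carrier k] col_basis_Z[OF k] ..
    also have "\<dots> = basis_V *\<^sub>v col (arnoldi_H s) k"
      unfolding mult_krylov_vec basis_V_def
        krylov_mat_mult_vec[OF col_carrier_vec[OF k arnoldi_H_carrier]] sum_col_arnoldi_H[OF k] ..
    also have "\<dots> = col (basis_V * arnoldi_H s) k"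
      using col_mult2[OF basis_V_carrier arnoldi_H_carrier k] ..
    finally show "col (M * basis_Z) k = col (basis_V * arnoldi_H s) k" .
  qed (use M basis_V_carrier basis_Z_carrier in auto)
  finally show ?thesis .
qed

end

locale variant_rat_krylov = rat_krylov_data +
  assumes variant: "mat_variant M (rat_krylov M b s (length s))"
begin

lemma poly_mat_mult_vec_nonzero:
  assumes p: "p \<noteq> 0" and deg: "degree p \<le> length s"
  shows "poly_mat p M *\<^sub>v b \<noteq> 0\<^sub>v n"
proof
  assume pb: "poly_mat p M *\<^sub>v b = 0\<^sub>v n"
  have "M *\<^sub>v v \<in> rat_krylov M b s (length s)" if v: "v \<in> rat_krylov M b s (length s)" for v
  proof -
    obtain r where v: "v = krylov_vec r" and r: "r \<in> polys_upto (length s)"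
      using v unfolding rat_krylov_eq_image by auto
    define d where "d = ([:0, 1:] * r) div p"
    define m where "m = ([:0, 1:] * r) mod p"
    have division: "[:0, 1:] * r = d * p + m" unfolding d_def m_def by simp
    have "krylov_vec (d * p) = inv_mat qM *\<^sub>v (poly_mat d M *\<^sub>v (poly_mat p M *\<^sub>v b))"
      unfolding krylov_vec_def poly_mat_mult[OF M]
      using assoc_mult_mat_vec[OF poly_mat_carrier[OF M] poly_mat_carrier[OF M] b] by simp
    then have "krylov_vec (d * p) = 0\<^sub>v n"
      unfolding pb mult_zero_vec[OF poly_mat_carrier[OF M]] mult_zero_vec[OF inv_qM(3)] .
    then have "M *\<^sub>v v = krylov_vec m"
      unfolding v mult_krylov_vec division krylov_vec_add by simp
    moreover have "m \<in> polys_upto (length s)"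
      using degree_mod_less[OF p, of "[:0, 1:] * r"] deg unfolding m_def polys_upto_def by auto
    ultimately show ?thesis unfolding rat_krylov_eq_image by auto
  qed
  then show False using variant unfolding mat_variant_def by blast
qed

lemma length_poles_pos: "0 < length s"
proof (rule ccontr)
  assume "\<not> 0 < length s"
  then have "polys_upto (length s) = {0}" unfolding polys_upto_def by auto
  then have "rat_krylov M b s (length s) = {0\<^sub>v n}"
    unfolding rat_krylov_eq_image by (simp add: krylov_vec_0)
  then show False using variant mult_zero_vec[OF M] unfolding mat_variant_def by auto
qed

lemma krylov_vec_pole_sum_eq_0D:
  assumes S: "S \<subseteq> {..length s}"
    and zero: "krylov_vec (\<Sum>k\<in>S. smult (c k) (pole_poly (drop k s))) = 0\<^sub>v n"
    and m: "m \<in> S"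
  shows "c m = 0"
proof -
  let ?p = "\<Sum>k\<in>S. smult (c k) (pole_poly (drop k s))"
  have "degree ?p \<le> length s"
    using S by (intro degree_sum_pole_poly_drop_le) (auto intro: finite_subset)
  then have "?p = 0"
    using poly_mat_mult_vec_nonzero krylov_vec_eq_0D[OF zero] by blast
  then show ?thesis using pole_poly_drop_independent[OF S _ m] by simp
qed

lemma full_col_rank_basis_V: "full_col_rank basis_V"
  unfolding full_col_rank_def
proof (intro ballI impI)
  fix x assume "x \<in> carrier_vec (dim_col basis_V)" and zero: "basis_V *\<^sub>v x = 0\<^sub>v (dim_row basis_V)"
  then have x: "x \<in> carrier_vec (Suc (length s))" using basis_V_carrier by simp
  have "x $ k = 0" if "k < Suc (length s)" for k
    using zero basis_V_carrier that
    by (intro krylov_vec_pole_sum_eq_0D[of "{..length s}"]) (auto simp: basis_V_mult_vec[OF x])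
  then show "x = 0\<^sub>v (dim_col basis_V)" using x basis_V_carrier by (intro eq_vecI) auto
qed

lemma full_col_rank_basis_Z: "full_col_rank basis_Z"
  unfolding full_col_rank_def
proof (intro ballI impI)
  fix y assume "y \<in> carrier_vec (dim_col basis_Z)" and zero: "basis_Z *\<^sub>v y = 0\<^sub>v (dim_row basis_Z)"
  then have y: "y \<in> carrier_vec (length s)" using basis_Z_carrier by simp
  have "y $ (Suc k - 1) = 0" if "k < length s" for k
    using zero basis_Z_carrier that
    by (intro krylov_vec_pole_sum_eq_0D[of "{1..length s}"]) (auto simp: basis_Z_mult_vec[OF y])
  then show "y = 0\<^sub>v (dim_col basis_Z)" using y basis_Z_carrier by (intro eq_vecI) auto
qed

lemma col_span_basis_Z: "col_span basis_Z = rat_krylov M b s (length s)"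
proof (intro equalityI subsetI)
  fix v assume "v \<in> col_span basis_Z"
  then obtain y where y: "y \<in> carrier_vec (length s)" and v: "v = basis_Z *\<^sub>v y"
    unfolding col_span_def using basis_Z_carrier by auto
  have "degree (\<Sum>k\<in>{1..length s}. smult (y $ (k - 1)) (pole_poly (drop k s))) \<le> length s - 1"
    by (rule degree_sum_pole_poly_drop_le) auto
  then show "v \<in> rat_krylov M b s (length s)"
    unfolding v basis_Z_mult_vec[OF y] rat_krylov_eq_image polys_upto_def
    using length_poles_pos by auto
next
  fix v assume "v \<in> rat_krylov M b s (length s)"
  then obtain p where v: "v = krylov_vec p" and "p \<in> polys_upto (length s)"
    unfolding rat_krylov_eq_image by auto
  then have "degree p \<le> length s - 1" unfolding polys_upto_def by auto
  moreover have "length s - (length s - 1) = 1" using length_poles_pos by linarith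
  ultimately obtain c where c: "p = (\<Sum>k\<in>{1..length s}. smult (c k) (pole_poly (drop k s)))"
    using pole_poly_drop_spanning[of "length s - 1" s p] by auto
  have "v = basis_Z *\<^sub>v vec (length s) (\<lambda>k. c (Suc k))"
    unfolding v c by (subst basis_Z_mult_vec) (auto intro!: arg_cong[where f = krylov_vec] sum.cong)
  then show "v \<in> col_span basis_Z" unfolding col_span_def using basis_Z_carrier by auto
qed

lemma RAD_associated_basis_V:
  "RAD_associated M b s (length s) basis_V (arnoldi_K (length s)) (arnoldi_H s)"
proof -
  obtain z0 :: complex where "z0 \<notin> set s"
    using ex_new_if_finite[OF infinite_UNIV_char_0] by blast
  then have regular: "\<exists>z. det (lower_part (arnoldi_H s) - z \<cdot>\<^sub>m lower_part (arnoldi_K (length s))) \<noteq> 0"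
    by (auto simp: det_arnoldi_pencil prod_list_zero_iff)
  have "is_RAD M (length s) basis_V (arnoldi_K (length s)) (arnoldi_H s)"
    unfolding is_RAD_def Let_def
    using M basis_V_carrier full_col_rank_basis_V arnoldi_relation upper_hessenberg_arnoldi regular poles
    by (auto simp: det_arnoldi_pencil prod_list_zero_iff)
  moreover have "RAD_poles_are (arnoldi_K (length s)) (arnoldi_H s) s"
    unfolding RAD_poles_are_def by (intro conjI exI[of _ 1]) (simp_all add: det_arnoldi_pencil)
  moreover have "col basis_V 0 = 1 \<cdot>\<^sub>v b"
    using col_basis_V[of 0] b by (simp add: krylov_vec_pole_poly)
  ultimately show ?thesis
    unfolding RAD_associated_def
    using col_span_basis_V col_span_basis_Z basis_V_mult_arnoldi_K by (auto intro!: exI[of _ 1])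
qed

end

theorem lemma3p1:
  fixes A C :: "complex mat" and s :: "complex list" and n j :: nat
  assumes "A \<in> carrier_mat n n"
    and "C \<in> carrier_mat 1 n"
    and "length s = j"
    and "\<forall>x\<in>set s. \<not> eigenvalue (mat_adjoint A) x"
    and "mat_variant (mat_adjoint A) (rat_krylov (mat_adjoint A) (col (mat_adjoint C) 0) s j)"
  shows "\<exists>V K H Z.
           RAD_associated (mat_adjoint A) (col (mat_adjoint C) 0) s j V K H \<and>
           K = mat (Suc j) j (\<lambda>(i, k). if i = Suc k then 1 else 0) \<and>
           H \<in> carrier_mat (Suc j) j \<and> upper_triangular (lower_part H) \<and>
           Z \<in> carrier_mat n j \<and>
           is_basis_mat Z (rat_krylov (mat_adjoint A) (col (mat_adjoint C) 0) s j) \<and>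
           V = mat_of_cols n (col (mat_adjoint C) 0 # cols Z)"
proof -
  have "mat_adjoint A \<in> carrier_mat n n" and "mat_adjoint C \<in> carrier_mat n 1"
    using assms(1,2) unfolding mat_adjoint_def by auto
  then interpret variant_rat_krylov "mat_adjoint A" "col (mat_adjoint C) 0" s n
    using assms(3-5) by unfold_locales auto
  show ?thesis
    unfolding assms(3)[symmetric] is_basis_mat_def
    using RAD_associated_basis_V basis_V_eq_mat_of_cols basis_Z_carrier full_col_rank_basis_Z
      col_span_basis_Z upper_triangular_lower_arnoldi_H
    by (intro exI[of _ basis_V] exI[of _ "arnoldi_K (length s)"] exI[of _ "arnoldi_H s"]
        exI[of _ basis_Z]) (simp add: arnoldi_K_def)
qed

end
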